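(* If the action of $H$ on $X$ is weakly admissible (with respect to $\lambda$), then there exists a Borel function $\varphi:X\to[0,\infty)$ with $\varphi\in L^1(X,\lambda)$ and $0<\int_H\varphi(\xi.h)\,dh\le 1$ for $\lambda$-almost every $\xi\in X$.
   Context: $X$ is a standard Borel space; $H$ is a second countable locally compact group with left Haar measure $dh$, acting on $X$ from the right, $(\xi,h)\mapsto\xi.h$, jointly measurably. $\lambda$ is a $\sigma$-finite Borel measure on $X$ which is quasi-invariant, i.e. for each $h\in H$ the measure $B\mapsto\lambda(B.h)$ is equivalent to $\lambda$. The action is called weakly admissible if there exists a Borel function $\varphi:X\to[0,\infty)$ with $0<\int_H\varphi(\xi.h)\,dh<\infty$ for $\lambda$-almost every $\xi\in X$. *)

theory Defs
  imports "HOL-Analysis.Analysis"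
begin

text \<open>The group H is a type of class topological_group_add (written additively,
  not necessarily commutative: g + h is the group product gh), Hausdorff,
  second countable and locally compact.  The standard Borel space X is
  modelled as a Polish space type carrying its Borel sigma-algebra.\<close>

definition locally_compact_group :: "'h::{topological_group_add,t2_space} itself \<Rightarrow> bool" where
  "locally_compact_group _ \<longleftrightarrow> locally_compact_space (euclidean :: 'h topology)"

text \<open>Left Haar measure: a nonzero left-invariant Borel measure that is finite on
  compact sets and positive on nonempty open sets (Radon, as regularity is
  automatic on second countable locally compact spaces).\<close>

definition left_haar_measure :: "'h::{topological_group_add,t2_space} measure \<Rightarrow> bool" where
  "left_haar_measure \<mu> \<longleftrightarrow>
     sets \<mu> = sets borel \<and>
     (\<forall>g A. A \<in> sets borel \<longrightarrow> emeasure \<mu> ((\<lambda>x. g + x) ` A) = emeasure \<mu> A) \<and>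
     (\<forall>K. compact K \<longrightarrow> emeasure \<mu> K < \<infinity>) \<and>
     (\<forall>U. open U \<and> U \<noteq> {} \<longrightarrow> emeasure \<mu> U > 0)"

text \<open>Jointly measurable right action: \<open>act \<xi> h\<close> stands for \<xi>.h.\<close>

definition measurable_right_action :: "('x::topological_space \<Rightarrow> 'h::{topological_group_add} \<Rightarrow> 'x) \<Rightarrow> bool" where
  "measurable_right_action act \<longleftrightarrow>
     (\<forall>\<xi>. act \<xi> 0 = \<xi>) \<and>
     (\<forall>\<xi> g h. act (act \<xi> g) h = act \<xi> (g + h)) \<and>
     (\<lambda>p. act (fst p) (snd p)) \<in> borel_measurable (borel \<Otimes>\<^sub>M borel)"

definition quasi_invariant :: "'x::topological_space measure \<Rightarrow> ('x \<Rightarrow> 'h \<Rightarrow> 'x) \<Rightarrow> bool" where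
  "quasi_invariant lam act \<longleftrightarrow>
     (\<forall>h B. B \<in> sets borel \<longrightarrow>
        (emeasure lam ((\<lambda>\<xi>. act \<xi> h) ` B) = 0 \<longleftrightarrow> emeasure lam B = 0))"

definition weakly_admissible :: "'x::topological_space measure \<Rightarrow> 'h measure \<Rightarrow> ('x \<Rightarrow> 'h \<Rightarrow> 'x) \<Rightarrow> bool" where
  "weakly_admissible lam \<mu> act \<longleftrightarrow>
     (\<exists>\<phi> :: 'x \<Rightarrow> real. \<phi> \<in> borel_measurable borel \<and> (\<forall>\<xi>. 0 \<le> \<phi> \<xi>) \<and>
        (AE \<xi> in lam. 0 < (\<integral>\<^sup>+ h. ennreal (\<phi> (act \<xi> h)) \<partial>\<mu>) \<and>
                       (\<integral>\<^sup>+ h. ennreal (\<phi> (act \<xi> h)) \<partial>\<mu>) < \<infinity>))"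

end

theory Submission
  imports Defs
begin

(* Let phi witness weak admissibility and let
     Phi(xi) = integral over H of phi(xi.h) dh
   be its orbit integral.  Left invariance of the Haar measure makes Phi
   constant along orbits: Phi(xi.g) = Phi(xi).  Hence psi = phi / Phi (read
   as 0 where Phi is 0 or infinite) has orbit integral exactly 1 on every
   orbit where 0 < Phi < infinity, which by hypothesis is lambda-almost every
   orbit.  As lambda is sigma-finite, it carries a strictly positive
   integrable function w; then rho = min psi w is integrable, its orbit
   integral is at most that of psi, and it vanishes only where that of psi
   does. *)

text \<open>A Borel measure that is finite on compact sets of a second countable
  locally compact space is sigma-finite: the basic open sets with compact
  closure cover the space and have finite measure.  This is what makes
  Tonelli's theorem available for integrals over the group.\<close>

lemma sigma_finite_if_finite_on_compacts:
  fixes \<mu> :: "'a::{t2_space,second_countable_topology} measure"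
  assumes lc: "locally_compact_space (euclidean :: 'a topology)"
    and sets: "sets \<mu> = sets borel"
    and finite: "\<And>K. compact K \<Longrightarrow> emeasure \<mu> K < \<infinity>"
  shows "sigma_finite_measure \<mu>"
proof -
  obtain B :: "'a set set" where cB: "countable B" and tB: "topological_basis B"
    using ex_countable_basis by blast
  define B' where "B' = {b\<in>B. \<exists>K. compact K \<and> b \<subseteq> K}"
  have cover: "\<Union>B' = UNIV"
  proof safe
    fix x :: 'a
    obtain U K where "open U" "compact K" "x \<in> U" "U \<subseteq> K"
      using lc unfolding locally_compact_space_def
      by (auto simp: compactin_euclidean_iff) blast
    then obtain b where "b \<in> B" "x \<in> b" "b \<subseteq> U"
      using tB by (meson topological_basisE)
    then show "x \<in> \<Union>B'" unfolding B'_def using \<open>U \<subseteq> K\<close> \<open>compact K\<close> by blast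
  qed auto
  have meas: "B' \<subseteq> sets \<mu>"
    using tB unfolding B'_def sets by (auto intro!: borel_open simp: topological_basis_open)
  have "emeasure \<mu> b \<noteq> \<infinity>" if "b \<in> B'" for b
  proof -
    obtain K where "compact K" "b \<subseteq> K" using \<open>b \<in> B'\<close> unfolding B'_def by auto
    then have "emeasure \<mu> b \<le> emeasure \<mu> K"
      by (intro emeasure_mono) (auto simp: sets intro: borel_compact)
    also have "\<dots> < \<infinity>" using finite \<open>compact K\<close> .
    finally show ?thesis by auto
  qed
  moreover have "countable B'" using cB unfolding B'_def by auto
  ultimately show ?thesis unfolding sigma_finite_measure_def
    using cover meas sets_eq_imp_space_eq[OF sets] by (intro exI[of _ B']) auto
qed

lemma haar_sigma_finite:
  fixes \<mu> :: "'h::{topological_group_add,t2_space,second_countable_topology} measure"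
  assumes "locally_compact_group TYPE('h)" and "left_haar_measure \<mu>"
  shows "sigma_finite_measure \<mu>"
  using assms unfolding locally_compact_group_def left_haar_measure_def
  by (intro sigma_finite_if_finite_on_compacts) auto

text \<open>Left invariance, phrased as invariance of the measure under the pushforward
  along a left translation; in this form it transforms integrals.\<close>

lemma haar_distr_left_translation:
  fixes \<mu> :: "'h::{topological_group_add,t2_space} measure"
  assumes H: "left_haar_measure \<mu>"
  shows "distr \<mu> borel (\<lambda>h. g + h) = \<mu>"
proof (rule measure_eqI)
  have sets: "sets \<mu> = sets borel" using H unfolding left_haar_measure_def by auto
  then show "sets (distr \<mu> borel (\<lambda>h. g + h)) = sets \<mu>" by simp
  fix A assume "A \<in> sets (distr \<mu> borel (\<lambda>h. g + h))"
  then have A: "A \<in> sets borel" by simp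
  have meas: "(\<lambda>h. g + h) \<in> measurable \<mu> borel"
    unfolding measurable_cong_sets[OF sets refl]
    by (intro borel_measurable_continuous_onI continuous_intros)
  have "(\<lambda>h. g + h) -` A \<inter> space \<mu> = (\<lambda>a. - g + a) ` A"
  proof safe
    fix x assume "g + x \<in> A"
    then show "x \<in> (\<lambda>a. - g + a) ` A"
      by (intro image_eqI[of _ _ "g + x"]) (auto simp: add.assoc[symmetric])
  qed (auto simp: sets_eq_imp_space_eq[OF sets] add.assoc[symmetric])
  then show "emeasure (distr \<mu> borel (\<lambda>h. g + h)) A = emeasure \<mu> A"
    using H A unfolding left_haar_measure_def by (simp add: emeasure_distr[OF meas A])
qed

definition orbit_integral :: "'h measure \<Rightarrow> ('x \<Rightarrow> 'h \<Rightarrow> 'x) \<Rightarrow> ('x \<Rightarrow> real) \<Rightarrow> 'x \<Rightarrow> ennreal"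
  where "orbit_integral \<mu> act \<phi> \<xi> = (\<integral>\<^sup>+ h. ennreal (\<phi> (act \<xi> h)) \<partial>\<mu>)"

text \<open>By Tonelli, the orbit integral of a Borel function is Borel in \<open>\<xi>\<close>.\<close>

lemma orbit_integral_measurable:
  fixes act :: "'x::topological_space \<Rightarrow> 'h::topological_space \<Rightarrow> 'x"
  assumes "sigma_finite_measure \<mu>" and smu: "sets \<mu> = sets borel"
    and act: "(\<lambda>p. act (fst p) (snd p)) \<in> borel_measurable (borel \<Otimes>\<^sub>M borel)"
    and \<phi>: "\<phi> \<in> borel_measurable borel"
  shows "orbit_integral \<mu> act \<phi> \<in> borel_measurable borel"
proof -
  interpret sigma_finite_measure \<mu> by fact
  have "(\<lambda>p. act (fst p) (snd p)) \<in> borel_measurable (borel \<Otimes>\<^sub>M \<mu>)"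
    using act by (subst measurable_cong_sets[OF sets_pair_measure_cong[OF refl smu] refl])
  then have "(\<lambda>p. \<phi> (act (fst p) (snd p))) \<in> borel_measurable (borel \<Otimes>\<^sub>M \<mu>)"
    using \<phi> by (rule measurable_compose)
  then have "(\<lambda>(\<xi>, h). ennreal (\<phi> (act \<xi> h))) \<in> borel_measurable (borel \<Otimes>\<^sub>M \<mu>)"
    by (simp add: case_prod_beta')
  then show ?thesis
    unfolding orbit_integral_def[abs_def] by (rule borel_measurable_nn_integral)
qed

lemma action_orbit_measurable:
  fixes act :: "'x::topological_space \<Rightarrow> 'h::topological_space \<Rightarrow> 'x"
  assumes act: "(\<lambda>p. act (fst p) (snd p)) \<in> borel_measurable (borel \<Otimes>\<^sub>M borel)"
  shows "(\<lambda>h. act \<xi> h) \<in> borel_measurable borel"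
  using measurable_compose[OF measurable_Pair1'[of \<xi> borel borel] act] by simp

lemma orbit_integral_action_invariant:
  fixes act :: "'x::topological_space \<Rightarrow> 'h::{topological_group_add,t2_space} \<Rightarrow> 'x"
  assumes H: "left_haar_measure \<mu>"
    and act: "(\<lambda>p. act (fst p) (snd p)) \<in> borel_measurable (borel \<Otimes>\<^sub>M borel)"
    and compose: "\<And>\<xi> g h. act (act \<xi> g) h = act \<xi> (g + h)"
    and \<phi>: "\<phi> \<in> borel_measurable borel"
  shows "orbit_integral \<mu> act \<phi> (act \<xi> g) = orbit_integral \<mu> act \<phi> \<xi>"
proof -
  have smu: "sets \<mu> = sets borel" using H unfolding left_haar_measure_def by auto
  have shift: "(\<lambda>h. g + h) \<in> measurable \<mu> borel"
    unfolding measurable_cong_sets[OF smu refl]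
    by (intro borel_measurable_continuous_onI continuous_intros)
  have "(\<lambda>h. ennreal (\<phi> (act \<xi> h))) \<in> borel_measurable borel"
    using measurable_compose[OF action_orbit_measurable[OF act] \<phi>] by measurable
  then have integrand: "(\<lambda>h. ennreal (\<phi> (act \<xi> h))) \<in> borel_measurable (distr \<mu> borel (\<lambda>h. g + h))"
    by simp
  have "orbit_integral \<mu> act \<phi> \<xi> = (\<integral>\<^sup>+ h. ennreal (\<phi> (act \<xi> h)) \<partial>distr \<mu> borel (\<lambda>h. g + h))"
    unfolding orbit_integral_def haar_distr_left_translation[OF H] ..
  also have "\<dots> = (\<integral>\<^sup>+ h. ennreal (\<phi> (act \<xi> (g + h))) \<partial>\<mu>)"
    using nn_integral_distr[OF shift integrand] .
  finally show ?thesis unfolding orbit_integral_def compose by simp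
qed

text \<open>Where it is 0 or infinite, \<open>enn2real\<close> yields 0 and
  the quotient is 0, so no case distinction is needed in the definition.\<close>

lemma orbit_integral_normalised:
  assumes invariant: "\<And>g. orbit_integral \<mu> act \<phi> (act \<xi> g) = orbit_integral \<mu> act \<phi> \<xi>"
    and orbit_meas[measurable]: "(\<lambda>h. \<phi> (act \<xi> h)) \<in> borel_measurable \<mu>"
    and nonneg: "\<And>\<eta>. 0 \<le> \<phi> \<eta>"
    and pos: "0 < orbit_integral \<mu> act \<phi> \<xi>" and fin: "orbit_integral \<mu> act \<phi> \<xi> < \<infinity>"
  shows "orbit_integral \<mu> act (\<lambda>\<eta>. \<phi> \<eta> / enn2real (orbit_integral \<mu> act \<phi> \<eta>)) \<xi> = 1"
proof -
  define c where "c = enn2real (orbit_integral \<mu> act \<phi> \<xi>)"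
  have Pc: "orbit_integral \<mu> act \<phi> \<xi> = ennreal c" and c0: "0 < c"
    using pos fin by (auto simp: c_def ennreal_enn2real_if enn2real_positive_iff)
  have "orbit_integral \<mu> act (\<lambda>\<eta>. \<phi> \<eta> / enn2real (orbit_integral \<mu> act \<phi> \<eta>)) \<xi>
      = (\<integral>\<^sup>+ h. ennreal (\<phi> (act \<xi> h) / enn2real (orbit_integral \<mu> act \<phi> (act \<xi> h))) \<partial>\<mu>)"
    by (rule orbit_integral_def)
  also have "\<dots> = (\<integral>\<^sup>+ h. ennreal (\<phi> (act \<xi> h)) * ennreal (1 / c) \<partial>\<mu>)"
    unfolding invariant c_def[symmetric]
    using c0 nonneg by (intro nn_integral_cong) (simp add: ennreal_mult[symmetric])
  also have "\<dots> = orbit_integral \<mu> act \<phi> \<xi> * ennreal (1 / c)"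
    unfolding orbit_integral_def by (rule nn_integral_multc) measurable
  also have "\<dots> = 1" using c0 by (simp add: Pc ennreal_mult[symmetric])
  finally show ?thesis .
qed

lemma nn_integral_min_positive_eq_0_iff:
  fixes f g :: "'a \<Rightarrow> real"
  assumes [measurable]: "f \<in> borel_measurable M" "g \<in> borel_measurable M"
    and nonneg: "\<And>x. 0 \<le> f x" and pos: "\<And>x. 0 < g x"
  shows "(\<integral>\<^sup>+ x. ennreal (min (f x) (g x)) \<partial>M) = 0 \<longleftrightarrow> (\<integral>\<^sup>+ x. ennreal (f x) \<partial>M) = 0"
proof -
  have "ennreal (min (f x) (g x)) = 0 \<longleftrightarrow> ennreal (f x) = 0" for x
    using nonneg[of x] pos[of x] by (auto simp: min_def)
  then show ?thesis by (simp add: nn_integral_0_iff_AE)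
qed

lemma orbit_integral_truncated:
  assumes one: "orbit_integral \<mu> act \<psi> \<xi> = 1"
    and [measurable]: "(\<lambda>h. \<psi> (act \<xi> h)) \<in> borel_measurable \<mu>" "(\<lambda>h. w (act \<xi> h)) \<in> borel_measurable \<mu>"
    and nonneg: "\<And>\<eta>. 0 \<le> \<psi> \<eta>" and pos: "\<And>\<eta>. 0 < w \<eta>"
  shows "0 < orbit_integral \<mu> act (\<lambda>\<eta>. min (\<psi> \<eta>) (w \<eta>)) \<xi>"
    and "orbit_integral \<mu> act (\<lambda>\<eta>. min (\<psi> \<eta>) (w \<eta>)) \<xi> \<le> 1"
proof -
  have "orbit_integral \<mu> act (\<lambda>\<eta>. min (\<psi> \<eta>) (w \<eta>)) \<xi> \<noteq> 0"
    using one nn_integral_min_positive_eq_0_iff[of "\<lambda>h. \<psi> (act \<xi> h)" \<mu> "\<lambda>h. w (act \<xi> h)"]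
    by (simp add: orbit_integral_def nonneg pos)
  then show "0 < orbit_integral \<mu> act (\<lambda>\<eta>. min (\<psi> \<eta>) (w \<eta>)) \<xi>"
    by (simp add: zero_less_iff_neq_zero)
  have "orbit_integral \<mu> act (\<lambda>\<eta>. min (\<psi> \<eta>) (w \<eta>)) \<xi> \<le> orbit_integral \<mu> act \<psi> \<xi>"
    unfolding orbit_integral_def by (intro nn_integral_mono ennreal_leI) simp
  then show "orbit_integral \<mu> act (\<lambda>\<eta>. min (\<psi> \<eta>) (w \<eta>)) \<xi> \<le> 1" using one by simp
qed

lemma orbit_integral_normalised_truncated:
  fixes act :: "'x::topological_space \<Rightarrow> 'h::{topological_group_add,t2_space} \<Rightarrow> 'x"
  assumes H: "left_haar_measure \<mu>" and "sigma_finite_measure \<mu>"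
    and act: "(\<lambda>p. act (fst p) (snd p)) \<in> borel_measurable (borel \<Otimes>\<^sub>M borel)"
    and compose: "\<And>\<xi> g h. act (act \<xi> g) h = act \<xi> (g + h)"
    and [measurable]: "\<phi> \<in> borel_measurable borel" "w \<in> borel_measurable borel"
    and \<phi>_nonneg: "\<And>\<eta>. 0 \<le> \<phi> \<eta>" and w_pos: "\<And>\<eta>. 0 < w \<eta>"
    and orbit_pos: "0 < orbit_integral \<mu> act \<phi> \<xi>" and orbit_fin: "orbit_integral \<mu> act \<phi> \<xi> < \<infinity>"
  defines "\<rho> \<equiv> \<lambda>\<eta>. min (\<phi> \<eta> / enn2real (orbit_integral \<mu> act \<phi> \<eta>)) (w \<eta>)"
  shows "0 < orbit_integral \<mu> act \<rho> \<xi> \<and> orbit_integral \<mu> act \<rho> \<xi> \<le> 1"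
proof -
  have smu: "sets \<mu> = sets borel" using H unfolding left_haar_measure_def by auto
  have along_orbit: "(\<lambda>h. f (act \<xi> h)) \<in> borel_measurable \<mu>"
    if "f \<in> borel_measurable borel" for f :: "'x \<Rightarrow> real"
    using measurable_compose[OF action_orbit_measurable[OF act] that]
    by (simp add: measurable_cong_sets[OF smu refl])
  define \<psi> where "\<psi> \<eta> = \<phi> \<eta> / enn2real (orbit_integral \<mu> act \<phi> \<eta>)" for \<eta>
  have \<psi>_meas: "\<psi> \<in> borel_measurable borel" unfolding \<psi>_def
    using orbit_integral_measurable[OF assms(2) smu act] by measurable
  have \<psi>_nonneg: "0 \<le> \<psi> \<eta>" for \<eta> unfolding \<psi>_def using \<phi>_nonneg by simp
  have "orbit_integral \<mu> act \<psi> \<xi> = 1" unfolding \<psi>_def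
    using orbit_integral_normalised[OF orbit_integral_action_invariant[OF H act compose]
        along_orbit \<phi>_nonneg orbit_pos orbit_fin] by simp
  then show ?thesis unfolding \<rho>_def \<psi>_def[symmetric]
    using orbit_integral_truncated[of \<mu> act \<psi> \<xi> w, OF _ along_orbit[OF \<psi>_meas]
        along_orbit \<psi>_nonneg w_pos] by simp
qed

text \<open>A sigma-finite measure admits a strictly positive, real valued, integrable
  function; it serves to make the normalised function integrable.\<close>

lemma (in sigma_finite_measure) Ex_positive_integrable_real:
  "\<exists>w :: 'a \<Rightarrow> real. integrable M w \<and> (\<forall>x\<in>space M. 0 < w x)"
proof -
  obtain h where h: "h \<in> borel_measurable M" "integral\<^sup>N M h \<noteq> \<infinity>"
    and pos: "\<And>x. x \<in> space M \<Longrightarrow> 0 < h x \<and> h x < \<infinity>"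
    using Ex_finite_integrable_function by auto
  have "(\<integral>\<^sup>+ x. ennreal (enn2real (h x)) \<partial>M) = integral\<^sup>N M h"
    using pos by (intro nn_integral_cong) (simp add: ennreal_enn2real)
  then have "integrable M (\<lambda>x. enn2real (h x))"
    using h by (intro integrableI_nonneg) (auto simp: top.not_eq_extremum)
  moreover have "\<forall>x\<in>space M. 0 < enn2real (h x)"
    using pos by (auto simp: enn2real_positive_iff)
  ultimately show ?thesis by blast
qed

theorem mainTheorem4:
  fixes act :: "'x::polish_space \<Rightarrow> 'h::{topological_group_add,t2_space,second_countable_topology} \<Rightarrow> 'x"
    and \<mu> :: "'h measure" and lam :: "'x measure"
  assumes "locally_compact_group TYPE('h)"
    and "left_haar_measure \<mu>"
    and "measurable_right_action act"
    and "sets lam = sets borel"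
    and "sigma_finite_measure lam"
    and "quasi_invariant lam act"
    and "weakly_admissible lam \<mu> act"
  shows "\<exists>\<phi> :: 'x \<Rightarrow> real. \<phi> \<in> borel_measurable borel \<and> (\<forall>\<xi>. 0 \<le> \<phi> \<xi>) \<and>
           integrable lam \<phi> \<and>
           (AE \<xi> in lam. 0 < (\<integral>\<^sup>+ h. ennreal (\<phi> (act \<xi> h)) \<partial>\<mu>) \<and>
                          (\<integral>\<^sup>+ h. ennreal (\<phi> (act \<xi> h)) \<partial>\<mu>) \<le> 1)"
proof -
  note slam = assms(4)
  interpret lam: sigma_finite_measure lam by fact
  have smu: "sets \<mu> = sets borel" using assms(2) unfolding left_haar_measure_def by auto
  have act: "(\<lambda>p. act (fst p) (snd p)) \<in> borel_measurable (borel \<Otimes>\<^sub>M borel)"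
    and compose: "\<And>\<xi> g h. act (act \<xi> g) h = act \<xi> (g + h)"
    using assms(3) unfolding measurable_right_action_def by auto
  obtain \<phi> :: "'x \<Rightarrow> real" where [measurable]: "\<phi> \<in> borel_measurable borel"
    and \<phi>_nonneg: "\<And>\<xi>. 0 \<le> \<phi> \<xi>"
    and \<phi>_AE: "AE \<xi> in lam. 0 < orbit_integral \<mu> act \<phi> \<xi> \<and> orbit_integral \<mu> act \<phi> \<xi> < \<infinity>"
    using assms(7) unfolding weakly_admissible_def orbit_integral_def by blast
  obtain w :: "'x \<Rightarrow> real" where w: "integrable lam w" and w_pos: "\<And>\<eta>. 0 < w \<eta>"
    using lam.Ex_positive_integrable_real sets_eq_imp_space_eq[OF slam] by auto
  have [measurable]: "w \<in> borel_measurable borel" using w measurable_cong_sets[OF slam refl] by auto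
  define \<rho> where "\<rho> \<eta> = min (\<phi> \<eta> / enn2real (orbit_integral \<mu> act \<phi> \<eta>)) (w \<eta>)" for \<eta>
  have \<rho>_meas: "\<rho> \<in> borel_measurable borel" unfolding \<rho>_def
    using orbit_integral_measurable[OF haar_sigma_finite[OF assms(1,2)] smu act] by measurable
  have \<rho>_bounds: "0 \<le> \<rho> \<eta> \<and> \<rho> \<eta> \<le> w \<eta>" for \<eta>
    unfolding \<rho>_def using \<phi>_nonneg[of \<eta>] w_pos[of \<eta>] by simp
  have "integrable lam \<rho>"
    using \<rho>_meas \<rho>_bounds w_pos by (intro Bochner_Integration.integrable_bound[OF w])
      (auto simp: measurable_cong_sets[OF slam refl] less_imp_le)
  moreover have "AE \<xi> in lam. 0 < orbit_integral \<mu> act \<rho> \<xi> \<and> orbit_integral \<mu> act \<rho> \<xi> \<le> 1"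
    using \<phi>_AE unfolding \<rho>_def[abs_def] by eventually_elim
      (intro orbit_integral_normalised_truncated[OF assms(2) haar_sigma_finite[OF assms(1,2)] act compose]
        \<phi>_nonneg w_pos; simp_all)
  ultimately show ?thesis using \<rho>_meas \<rho>_bounds unfolding orbit_integral_def by blast
qed

end
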